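(* Let $Q$ be a quantity space over a field $K$. Then $Q/{\sim}$, with multiplication $[x][y]=[xy]$, is a free abelian group of finite rank.
   Context: A scalable monoid over a (unital, associative) ring $R$ is a monoid $X$ (identity $1_X$, product written $xy$) together with a map $R\times X\to X$, $(\alpha,x)\mapsto\alpha\cdot x$, such that $1\cdot x=x$, $\alpha\cdot(\beta\cdot x)=\alpha\beta\cdot x$ and $\alpha\cdot(xy)=(\alpha\cdot x)y=x(\alpha\cdot y)$ for all $\alpha,\beta\in R$, $x,y\in X$. A quantity space over a field $K$ is a commutative scalable monoid $Q$ over $K$ for which there exists a finite set $\{e_1,\ldots,e_n\}$ of invertible elements of $Q$ (a basis) such that every $x\in Q$ has a unique expansion $x=\mu\cdot\prod_{i=1}^n e_i^{k_i}$ with $\mu\in K$ and $k_1,\ldots,k_n\in\mathbb{Z}$. On $Q$, $x\sim y$ means $\alpha\cdot x=\beta\cdot y$ for some $\alpha,\beta\in K$; this is an equivalence relation compatible with multiplication, $[x]$ denotes the class of $x$ (a dimension), and $Q/{\sim}$ is the set of classes with $[x][y]=[xy]$ and identity $[1_Q]$. *)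

theory Defs
  imports "HOL-Algebra.Free_Abelian_Groups"
begin

definition scalable_monoid :: "('q \<Rightarrow> 'q \<Rightarrow> 'q) \<Rightarrow> 'q \<Rightarrow> ('k::ring_1 \<Rightarrow> 'q \<Rightarrow> 'q) \<Rightarrow> bool" where
  "scalable_monoid m u sc \<longleftrightarrow>
     (\<forall>x y z. m (m x y) z = m x (m y z)) \<and>
     (\<forall>x. m u x = x \<and> m x u = x) \<and>
     (\<forall>x. sc 1 x = x) \<and>
     (\<forall>a b x. sc a (sc b x) = sc (a * b) x) \<and>
     (\<forall>a x y. sc a (m x y) = m (sc a x) y \<and> sc a (m x y) = m x (sc a y))"

definition m_invertible :: "('q \<Rightarrow> 'q \<Rightarrow> 'q) \<Rightarrow> 'q \<Rightarrow> 'q \<Rightarrow> bool" where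
  "m_invertible m u x \<longleftrightarrow> (\<exists>y. m x y = u \<and> m y x = u)"

definition m_inv :: "('q \<Rightarrow> 'q \<Rightarrow> 'q) \<Rightarrow> 'q \<Rightarrow> 'q \<Rightarrow> 'q" where
  "m_inv m u x = (THE y. m x y = u \<and> m y x = u)"

fun m_pow :: "('q \<Rightarrow> 'q \<Rightarrow> 'q) \<Rightarrow> 'q \<Rightarrow> 'q \<Rightarrow> nat \<Rightarrow> 'q" where
  "m_pow m u x 0 = u"
| "m_pow m u x (Suc n) = m x (m_pow m u x n)"

definition m_zpow :: "('q \<Rightarrow> 'q \<Rightarrow> 'q) \<Rightarrow> 'q \<Rightarrow> 'q \<Rightarrow> int \<Rightarrow> 'q" where
  "m_zpow m u x k = (if 0 \<le> k then m_pow m u x (nat k) else m_pow m u (m_inv m u x) (nat (- k)))"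

fun m_prod :: "('q \<Rightarrow> 'q \<Rightarrow> 'q) \<Rightarrow> 'q \<Rightarrow> 'q list \<Rightarrow> 'q" where
  "m_prod m u [] = u"
| "m_prod m u (x # xs) = m x (m_prod m u xs)"

definition basis_monomial :: "('q \<Rightarrow> 'q \<Rightarrow> 'q) \<Rightarrow> 'q \<Rightarrow> 'q list \<Rightarrow> int list \<Rightarrow> 'q" where
  "basis_monomial m u es ks = m_prod m u (map (\<lambda>(e, k). m_zpow m u e k) (zip es ks))"

definition is_qs_basis :: "('q \<Rightarrow> 'q \<Rightarrow> 'q) \<Rightarrow> 'q \<Rightarrow> ('k \<Rightarrow> 'q \<Rightarrow> 'q) \<Rightarrow> 'q list \<Rightarrow> bool" where
  "is_qs_basis m u sc es \<longleftrightarrow>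
     (\<forall>e \<in> set es. m_invertible m u e) \<and>
     (\<forall>x. \<exists>!p. length (snd p) = length es \<and> x = sc (fst p) (basis_monomial m u es (snd p)))"

definition quantity_space :: "('q \<Rightarrow> 'q \<Rightarrow> 'q) \<Rightarrow> 'q \<Rightarrow> ('k::field \<Rightarrow> 'q \<Rightarrow> 'q) \<Rightarrow> bool" where
  "quantity_space m u sc \<longleftrightarrow>
     scalable_monoid m u sc \<and> (\<forall>x y. m x y = m y x) \<and> (\<exists>es. is_qs_basis m u sc es)"

definition qsim :: "('k \<Rightarrow> 'q \<Rightarrow> 'q) \<Rightarrow> 'q \<Rightarrow> 'q \<Rightarrow> bool" where
  "qsim sc x y \<longleftrightarrow> (\<exists>a b. sc a x = sc b y)"

definition dim_class :: "('k \<Rightarrow> 'q \<Rightarrow> 'q) \<Rightarrow> 'q \<Rightarrow> 'q set" where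
  "dim_class sc x = {y. qsim sc x y}"

definition dim_monoid :: "('q \<Rightarrow> 'q \<Rightarrow> 'q) \<Rightarrow> 'q \<Rightarrow> ('k \<Rightarrow> 'q \<Rightarrow> 'q) \<Rightarrow> 'q set monoid" where
  "dim_monoid m u sc =
     \<lparr>carrier = range (dim_class sc),
      monoid.mult = (\<lambda>A B. dim_class sc (m (SOME x. x \<in> A) (SOME y. y \<in> B))),
      one = dim_class sc u\<rparr>"

end

theory Submission
  imports Defs "HOL-Algebra.Ring"
begin

(* Expanding every quantity as mu . e_1^k_1 ... e_n^k_n, two quantities are equivalent exactly
   when their exponent vectors agree (uniqueness of the expansion absorbs the scalars), and
   exponent vectors add under multiplication because the e_i are commuting units.  Hence
   k |-> [e_1^k_1 ... e_n^k_n] is an isomorphism from Z^n, the free abelian group on n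
   generators, onto Q/~; in particular Q/~ is a commutative group. *)

definition monoid_of :: "('q \<Rightarrow> 'q \<Rightarrow> 'q) \<Rightarrow> 'q \<Rightarrow> 'q monoid" where
  "monoid_of m u = \<lparr>carrier = UNIV, mult = m, one = u\<rparr>"

lemma monoid_of_simps [simp]:
  "carrier (monoid_of m u) = UNIV" "mult (monoid_of m u) = m" "one (monoid_of m u) = u"
  by (simp_all add: monoid_of_def)

lemma monoid_monoid_of:
  assumes "scalable_monoid m u sc"
  shows "monoid (monoid_of m u)"
  using assms by unfold_locales (auto simp: scalable_monoid_def)

lemma comm_monoid_monoid_of:
  assumes "scalable_monoid m u sc" and "\<And>x y. m x y = m y x"
  shows "comm_monoid (monoid_of m u)"
  by (rule monoid.monoid_comm_monoidI[OF monoid_monoid_of[OF assms(1)]]) (simp add: assms(2))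

context
  fixes m :: "'q \<Rightarrow> 'q \<Rightarrow> 'q" and u :: 'q
  assumes monoid: "monoid (monoid_of m u)"
begin

interpretation monoid "monoid_of m u" by (rule monoid)

lemma m_pow_eq_nat_pow: "m_pow m u x n = x [^]\<^bsub>monoid_of m u\<^esub> n"
proof (induction n)
  case (Suc n)
  then show ?case
    using nat_pow_Suc2[of x n] by simp
qed simp

lemma m_invertible_iff_Units: "m_invertible m u x \<longleftrightarrow> x \<in> Units (monoid_of m u)"
  by (auto simp: m_invertible_def Units_def)

lemma m_inv_eq_inv:
  assumes "m_invertible m u x"
  shows "Defs.m_inv m u x = inv\<^bsub>monoid_of m u\<^esub> x"
  unfolding Defs.m_inv_def
proof (rule the_equality)
  have x: "x \<in> Units (monoid_of m u)" using assms by (simp add: m_invertible_iff_Units)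
  then show "m x (inv\<^bsub>monoid_of m u\<^esub> x) = u \<and> m (inv\<^bsub>monoid_of m u\<^esub> x) x = u"
    using Units_r_inv Units_l_inv by fastforce
  fix y assume "m x y = u \<and> m y x = u"
  then show "y = inv\<^bsub>monoid_of m u\<^esub> x"
    using inv_unique[of y x "inv\<^bsub>monoid_of m u\<^esub> x"] Units_r_inv[OF x] by simp
qed

lemma m_zpow_eq_int_pow:
  assumes "m_invertible m u x"
  shows "m_zpow m u x k = x [^]\<^bsub>units_of (monoid_of m u)\<^esub> k"
proof -
  interpret U: group "units_of (monoid_of m u)" by (rule units_group)
  have x: "x \<in> Units (monoid_of m u)" using assms by (simp add: m_invertible_iff_Units)
  show ?thesis
  proof (cases "k < 0")
    case True
    have "m_zpow m u x k = (inv\<^bsub>monoid_of m u\<^esub> x) [^]\<^bsub>monoid_of m u\<^esub> nat (- k)"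
      using True by (simp add: m_zpow_def m_pow_eq_nat_pow m_inv_eq_inv[OF assms])
    also have "\<dots> = (inv\<^bsub>units_of (monoid_of m u)\<^esub> x)
                        [^]\<^bsub>units_of (monoid_of m u)\<^esub> nat (- k)"
      by (simp only: units_of_inv[OF x] units_of_pow[OF Units_inv_Units[OF x]])
    also have "\<dots> = x [^]\<^bsub>units_of (monoid_of m u)\<^esub> k"
      using True x by (simp add: U.nat_pow_inv units_of_carrier int_pow_def2 del: pow_nat)
    finally show ?thesis .
  next
    case False
    then have "m_zpow m u x k = x [^]\<^bsub>monoid_of m u\<^esub> nat k"
      by (simp add: m_zpow_def m_pow_eq_nat_pow)
    also have "\<dots> = x [^]\<^bsub>units_of (monoid_of m u)\<^esub> k"
      using False units_of_pow[OF x] by (metis pow_nat not_less)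
    finally show ?thesis .
  qed
qed

lemma m_zpow_add:
  assumes "m_invertible m u x"
  shows "m_zpow m u x (k + l) = m (m_zpow m u x k) (m_zpow m u x l)"
proof -
  interpret U: group "units_of (monoid_of m u)" by (rule units_group)
  have "x \<in> carrier (units_of (monoid_of m u))"
    using assms by (simp add: m_invertible_iff_Units units_of_carrier)
  then show ?thesis
    by (simp add: m_zpow_eq_int_pow[OF assms] U.int_pow_mult units_of_mult)
qed

end

lemma basis_monomial_add:
  assumes "comm_monoid (monoid_of m u)" and "\<forall>e\<in>set es. m_invertible m u e"
    and "length ks = length es" and "length ls = length es"
  shows "basis_monomial m u es (map2 (+) ks ls)
           = m (basis_monomial m u es ks) (basis_monomial m u es ls)"
  using assms(2-)
proof (induction es arbitrary: ks ls)
  case Nil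
  interpret comm_monoid "monoid_of m u" by (rule assms(1))
  from Nil show ?case using l_one[of u] by (simp add: basis_monomial_def)
next
  case (Cons e es)
  interpret comm_monoid "monoid_of m u" by (rule assms(1))
  have ac: "m (m x y) z = m x (m y z)" "m x y = m y x" "m x (m y z) = m y (m x z)" for x y z
    using m_assoc[of x y z] m_comm[of x y] m_lcomm[of x y z] by simp_all
  obtain k ks' l ls' where "ks = k # ks'" "ls = l # ls'"
    using Cons.prems by (cases ks; cases ls) auto
  with Cons show ?case
    using m_zpow_add[OF monoid_axioms, of e k l] by (simp add: basis_monomial_def ac)
qed

lemma carrier_dim_monoid [simp]: "carrier (dim_monoid m u sc) = range (dim_class sc)"
  by (simp add: dim_monoid_def)

lemma one_dim_monoid [simp]: "\<one>\<^bsub>dim_monoid m u sc\<^esub> = dim_class sc u"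
  by (simp add: dim_monoid_def)

lemma qsim_refl: "qsim sc x x"
  unfolding qsim_def by blast

lemma qsim_sym: "qsim sc x y \<Longrightarrow> qsim sc y x"
  unfolding qsim_def by metis

context
  fixes m :: "'q \<Rightarrow> 'q \<Rightarrow> 'q" and u :: 'q and sc :: "'k::comm_ring_1 \<Rightarrow> 'q \<Rightarrow> 'q"
  assumes scalable: "scalable_monoid m u sc"
begin

lemma scale_scale: "sc a (sc b x) = sc (a * b) x"
  using scalable by (simp add: scalable_monoid_def)

lemma scale_one: "sc 1 x = x"
  using scalable by (simp add: scalable_monoid_def)

lemma mult_scale_left: "m (sc a x) y = sc a (m x y)"
  using scalable unfolding scalable_monoid_def by metis

lemma mult_scale_right: "m x (sc a y) = sc a (m x y)"
  using scalable unfolding scalable_monoid_def by metis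

lemma mult_scale_scale: "m (sc a x) (sc b y) = sc (a * b) (m x y)"
  by (simp add: mult_scale_left mult_scale_right scale_scale mult.commute)

lemma qsim_scale: "qsim sc (sc a x) x"
  unfolding qsim_def by (metis scale_one scale_scale mult_1_left)

lemma qsim_trans:
  assumes "qsim sc x y" and "qsim sc y z"
  shows "qsim sc x z"
proof -
  obtain a b c d where xy: "sc a x = sc b y" and yz: "sc c y = sc d z"
    using assms unfolding qsim_def by blast
  have "sc (c * a) x = sc c (sc b y)"
    by (simp add: xy scale_scale[symmetric])
  also have "\<dots> = sc (b * c) y"
    by (simp add: scale_scale mult.commute)
  also have "\<dots> = sc (b * d) z"
    by (simp add: yz flip: scale_scale)
  finally show ?thesis
    unfolding qsim_def by blast
qed

lemma qsim_mult:
  assumes "qsim sc x x'" and "qsim sc y y'"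
  shows "qsim sc (m x y) (m x' y')"
proof -
  obtain a b c d where "sc a x = sc b x'" and "sc c y = sc d y'"
    using assms unfolding qsim_def by blast
  then have "sc (a * c) (m x y) = sc (b * d) (m x' y')"
    by (simp flip: mult_scale_scale)
  then show ?thesis
    unfolding qsim_def by blast
qed

lemma dim_class_eq_iff: "dim_class sc x = dim_class sc y \<longleftrightarrow> qsim sc x y"
proof
  assume "dim_class sc x = dim_class sc y"
  then have "y \<in> dim_class sc x"
    by (simp add: dim_class_def qsim_refl)
  then show "qsim sc x y"
    by (simp add: dim_class_def)
next
  assume "qsim sc x y"
  then show "dim_class sc x = dim_class sc y"
    unfolding dim_class_def by (intro Collect_cong) (meson qsim_sym qsim_trans)
qed

lemma qsim_some_dim_class: "qsim sc x (SOME x'. x' \<in> dim_class sc x)"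
proof -
  have "x \<in> dim_class sc x"
    by (simp add: dim_class_def qsim_refl)
  then show ?thesis
    by (metis dim_class_def mem_Collect_eq someI)
qed

lemma dim_monoid_mult:
  "dim_class sc x \<otimes>\<^bsub>dim_monoid m u sc\<^esub> dim_class sc y = dim_class sc (m x y)"
proof -
  have "qsim sc (m (SOME x'. x' \<in> dim_class sc x) (SOME y'. y' \<in> dim_class sc y)) (m x y)"
    by (intro qsim_mult qsim_sym[OF qsim_some_dim_class])
  then show ?thesis
    by (simp add: dim_monoid_def dim_class_eq_iff)
qed

lemma monoid_dim_monoid: "monoid (dim_monoid m u sc)"
proof -
  have monoid_laws: "m (m x y) z = m x (m y z)" "m u x = x" "m x u = x" for x y z
    using scalable by (simp_all add: scalable_monoid_def)
  show ?thesis
    by (rule monoidI) (auto simp: dim_monoid_mult monoid_laws)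
qed

end

lemma bij_betw_lookup_list:
  "bij_betw (\<lambda>f. map (Poly_Mapping.lookup f) [0..<n])
     (carrier (free_Abelian_group {..<n})) {ks. length ks = n}"
proof (rule bij_betw_imageI)
  show "inj_on (\<lambda>f. map (Poly_Mapping.lookup f) [0..<n]) (carrier (free_Abelian_group {..<n}))"
  proof (rule inj_onI, rule poly_mapping_eqI)
    fix f g i
    assume f: "f \<in> carrier (free_Abelian_group {..<n})"
      and g: "g \<in> carrier (free_Abelian_group {..<n})"
      and lookups_eq: "map (Poly_Mapping.lookup f) [0..<n] = map (Poly_Mapping.lookup g) [0..<n]"
    show "Poly_Mapping.lookup f i = Poly_Mapping.lookup g i"
    proof (cases "i < n")
      case False
      then have "i \<notin> Poly_Mapping.keys f" and "i \<notin> Poly_Mapping.keys g"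
        using f g by auto
      then show ?thesis
        by (simp add: not_in_keys_iff_lookup_eq_zero)
    qed (use lookups_eq in \<open>simp add: map_eq_conv\<close>)
  qed
  show "(\<lambda>f. map (Poly_Mapping.lookup f) [0..<n]) ` carrier (free_Abelian_group {..<n})
          = {ks. length ks = n}"
  proof (intro equalityI subsetI)
    fix ks :: "int list" assume "ks \<in> {ks. length ks = n}"
    define f where "f = Abs_poly_mapping (\<lambda>i. if i < n then ks ! i else 0)"
    have lookup_f: "Poly_Mapping.lookup f = (\<lambda>i. if i < n then ks ! i else 0)"
      unfolding f_def by (rule Abs_poly_mapping_inverse) (auto intro: finite_subset[of _ "{..<n}"])
    have "map (Poly_Mapping.lookup f) [0..<n] = ks"
      using \<open>ks \<in> _\<close> by (auto simp: lookup_f intro: nth_equalityI)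
    moreover have "f \<in> carrier (free_Abelian_group {..<n})"
      by (auto simp: in_keys_iff lookup_f split: if_splits)
    ultimately
    show "ks \<in> (\<lambda>f. map (Poly_Mapping.lookup f) [0..<n]) ` carrier (free_Abelian_group {..<n})"
      by blast
  qed auto
qed

lemma bij_betw_basis_monomial_dim_class:
  fixes sc :: "'k::comm_ring_1 \<Rightarrow> 'q \<Rightarrow> 'q"
  assumes "scalable_monoid m u sc" and "is_qs_basis m u sc es"
  shows "bij_betw (\<lambda>ks. dim_class sc (basis_monomial m u es ks))
           {ks. length ks = length es} (range (dim_class sc))"
proof (rule bij_betw_imageI)
  have expansion:
    "\<exists>!p. length (snd p) = length es \<and> x = sc (fst p) (basis_monomial m u es (snd p))" for x
    using assms(2) by (simp add: is_qs_basis_def)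
  show "inj_on (\<lambda>ks. dim_class sc (basis_monomial m u es ks)) {ks. length ks = length es}"
  proof (rule inj_onI)
    fix ks ls assume "ks \<in> {ks. length ks = length es}" "ls \<in> {ks. length ks = length es}"
      and "dim_class sc (basis_monomial m u es ks) = dim_class sc (basis_monomial m u es ls)"
    then obtain a b where "sc a (basis_monomial m u es ks) = sc b (basis_monomial m u es ls)"
      using dim_class_eq_iff[OF assms(1)] unfolding qsim_def by blast
    with expansion[of "sc a (basis_monomial m u es ks)"] \<open>ks \<in> _\<close> \<open>ls \<in> _\<close>
    have "(a, ks) = (b, ls)" by (metis fst_conv snd_conv mem_Collect_eq)
    then show "ks = ls" by simp
  qed
  show "(\<lambda>ks. dim_class sc (basis_monomial m u es ks)) ` {ks. length ks = length es}
          = range (dim_class sc)"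
  proof (intro equalityI subsetI)
    fix A assume "A \<in> range (dim_class sc)"
    then obtain x where "A = dim_class sc x" by blast
    obtain c ks where "length ks = length es" and "x = sc c (basis_monomial m u es ks)"
      using expansion[of x] by blast
    then have "A = dim_class sc (basis_monomial m u es ks)"
      using \<open>A = _\<close> dim_class_eq_iff[OF assms(1)] qsim_scale[OF assms(1)] by metis
    with \<open>length ks = _\<close>
    show "A \<in> (\<lambda>ks. dim_class sc (basis_monomial m u es ks)) ` {ks. length ks = length es}"
      by blast
  qed auto
qed

definition dim_of_exponents ::
    "('q \<Rightarrow> 'q \<Rightarrow> 'q) \<Rightarrow> 'q \<Rightarrow> ('k \<Rightarrow> 'q \<Rightarrow> 'q) \<Rightarrow> 'q list \<Rightarrow> (nat \<Rightarrow>\<^sub>0 int) \<Rightarrow> 'q set" where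
  "dim_of_exponents m u sc es f =
     dim_class sc (basis_monomial m u es (map (Poly_Mapping.lookup f) [0..<length es]))"

lemma dim_of_exponents_iso:
  fixes sc :: "'k::comm_ring_1 \<Rightarrow> 'q \<Rightarrow> 'q"
  assumes "scalable_monoid m u sc" and "\<And>x y. m x y = m y x" and "is_qs_basis m u sc es"
  shows "dim_of_exponents m u sc es \<in> iso (free_Abelian_group {..<length es}) (dim_monoid m u sc)"
proof (rule isoI)
  show "bij_betw (dim_of_exponents m u sc es)
          (carrier (free_Abelian_group {..<length es})) (carrier (dim_monoid m u sc))"
    unfolding dim_of_exponents_def[abs_def]
    using bij_betw_trans[OF bij_betw_lookup_list bij_betw_basis_monomial_dim_class[OF assms(1,3)]]
    by (simp add: o_def)
  have invertible: "\<forall>e\<in>set es. m_invertible m u e"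
    using assms(3) by (simp add: is_qs_basis_def)
  have "map (Poly_Mapping.lookup (f + g)) [0..<n]
          = map2 (+) (map (Poly_Mapping.lookup f) [0..<n]) (map (Poly_Mapping.lookup g) [0..<n])"
    for f g :: "nat \<Rightarrow>\<^sub>0 int" and n
    by (simp add: lookup_add zip_map_map zip_same_conv_map o_def)
  then show "dim_of_exponents m u sc es \<in> hom (free_Abelian_group {..<length es}) (dim_monoid m u sc)"
    using basis_monomial_add[OF comm_monoid_monoid_of[OF assms(1,2)] invertible]
    by (intro homI) (simp_all add: dim_of_exponents_def dim_monoid_mult[OF assms(1)])
qed

theorem proposition3p20:
  fixes m :: "'q \<Rightarrow> 'q \<Rightarrow> 'q" and u :: 'q and sc :: "'k::field \<Rightarrow> 'q \<Rightarrow> 'q"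
  assumes "quantity_space m u sc"
  shows "comm_group (dim_monoid m u sc) \<and>
         (\<exists>S :: nat set. finite S \<and> dim_monoid m u sc \<cong> free_Abelian_group S)"
proof -
  obtain es where scalable: "scalable_monoid m u sc" and "\<And>x y. m x y = m y x"
    and "is_qs_basis m u sc es"
    using assms unfolding quantity_space_def by blast
  then have iso: "free_Abelian_group {..<length es} \<cong> dim_monoid m u sc"
    by (rule is_isoI[OF dim_of_exponents_iso])
  have "comm_group (dim_monoid m u sc)"
    using abelian_free_Abelian_group iso monoid_dim_monoid[OF scalable]
    by (rule comm_group.iso_imp_comm_group)
  moreover have "dim_monoid m u sc \<cong> free_Abelian_group {..<length es}"
    using group_free_Abelian_group iso by (rule group.iso_sym)
  ultimately show ?thesis by blast
qed

end
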